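(* Let $X$ be a non-empty set. The monoid $T_X$ is right protomodal, and for every maximal left pre-reduced subset $E\subseteq E(T_X)$, $T_X$ is an inductive right $E$-monoid and $(P^{lt}_X,\cdot,R)\cong RRest(E,T_X)$ as unary semigroups.
   Context: A partition on $X$ is a set partition of $X\cup X'$, where $X'=\{x'\mid x\in X\}$ is a disjoint copy of $X$. The product $\alpha\beta$ of partitions: take a further disjoint copy $X''$; let $\alpha^\downarrow$ be the partition of $X\cup X''$ obtained from $\alpha$ by renaming each $x'$ as $x''$, and $\beta^\uparrow$ the partition of $X''\cup X'$ obtained from $\beta$ by renaming each $x$ as $x''$; form the graph on $X\cup X''\cup X'$ joining two vertices when they lie in a common block of $\alpha^\downarrow$ or of $\beta^\uparrow$; the blocks of $\alpha\beta$ are the non-empty intersections of its connected components with $X\cup X'$. This makes the set $P_X$ of partitions a monoid. $P^{lt}_X$ is the submonoid of left total partitions: those in which every $x\in X$ lies in a block containing some element of $X'$. For $\rho\in P^{lt}_X$ let $R(\rho)$ be the partition whose blocks are the sets $A\cup\{a'\mid a\in A\}$, where $A$ ranges over the classes of the equivalence relation on $X$ given by $x\sim y$ iff $x',y'$ lie in the same block of $\rho$; then $(P^{lt}_X,\cdot,R)$ is a right restriction monoid, i.e. it satisfies $xR(x)=x$, $R(x)R(y)=R(y)R(x)$, $R(xR(y))=R(x)R(y)$, $R(x)y=yR(xy)$. $T_X$ (maps $X\to X$, composed left to right: $st$ means $s$ first, then $t$) is identified with a submonoid of $P^{lt}_X$ via $t\mapsto$ the partition with blocks $t^{-1}(y)\cup\{y'\}$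 for $y\in\mathrm{ran}(t)$ and $\{y'\}$ for $y\notin\mathrm{ran}(t)$. For a semigroup $S$, $E(S)$ is its set of idempotents and $fS=\{fu\mid u\in S\}$; for $e,f\in E(S)$, $e\le_l f$ iff $e=fe$, and $e\sim_l f$ iff $e\le_l f$ and $f\le_l e$. $E\subseteq E(S)$ is left pre-reduced if $e=fe$ and $f=ef$ imply $e=f$ for $e,f\in E$, and maximal left pre-reduced if it contains exactly one element of each $\sim_l$-class of $E(S)$. A monoid $S$ is right protomodal if for every $e\in E(S)$ and $s\in S$, the set $\{u\in S\mid su=esu\}$ is non-empty and equals $fS$ for some $f\in E(S)$. Let $S$ be a monoid and $1\in E\subseteq E(S)$. $S$ is an inductive right $E$-monoid if $E$ is left pre-reduced, $(E,\le_l)$ is a meet-semilattice with meet $\wedge$, and (J1) for all $t\in S$, $e\in E$ there is $e\cdot t\in E$ such that for all $s\in S$: $ets=ts$ iff $(e\cdot t)s=s$; (J2) for $s\in S$, $e,f\in E$: $es=fs=s$ implies $(e\wedge f)s=s$. Then $RRest(E,S)$ is the set $\{(s,e)\in S\times E\mid se=s\}$ with multiplication $(s,e)(t,f)=(stg,g)$ where $g=(e\cdot t)\wedge f$, and unary operation $R((s,e))=(e,e)$. *)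

theory Defs
  imports "HOL-Algebra.Group" "HOL-Library.Disjoint_Sets"
begin

definition idems :: "('m, 'b) monoid_scheme \<Rightarrow> 'm set" where
  "idems S = {e \<in> carrier S. e \<otimes>\<^bsub>S\<^esub> e = e}"

definition le_l :: "('m, 'b) monoid_scheme \<Rightarrow> 'm \<Rightarrow> 'm \<Rightarrow> bool" where
  "le_l S e f \<longleftrightarrow> e = f \<otimes>\<^bsub>S\<^esub> e"

definition sim_l :: "('m, 'b) monoid_scheme \<Rightarrow> 'm \<Rightarrow> 'm \<Rightarrow> bool" where
  "sim_l S e f \<longleftrightarrow> le_l S e f \<and> le_l S f e"

definition left_pre_reduced :: "('m, 'b) monoid_scheme \<Rightarrow> 'm set \<Rightarrow> bool" where
  "left_pre_reduced S E \<longleftrightarrow> E \<subseteq> idems S \<and>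
     (\<forall>e\<in>E. \<forall>f\<in>E. e = f \<otimes>\<^bsub>S\<^esub> e \<and> f = e \<otimes>\<^bsub>S\<^esub> f \<longrightarrow> e = f)"

definition max_left_pre_reduced :: "('m, 'b) monoid_scheme \<Rightarrow> 'm set \<Rightarrow> bool" where
  "max_left_pre_reduced S E \<longleftrightarrow> E \<subseteq> idems S \<and>
     (\<forall>e\<in>idems S. \<exists>!f. f \<in> E \<and> sim_l S e f)"

definition right_protomodal :: "('m, 'b) monoid_scheme \<Rightarrow> bool" where
  "right_protomodal S \<longleftrightarrow> monoid S \<and>
     (\<forall>e\<in>idems S. \<forall>s\<in>carrier S.
        {u \<in> carrier S. s \<otimes>\<^bsub>S\<^esub> u = e \<otimes>\<^bsub>S\<^esub> s \<otimes>\<^bsub>S\<^esub> u} \<noteq> {} \<and>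
        (\<exists>f\<in>idems S. {u \<in> carrier S. s \<otimes>\<^bsub>S\<^esub> u = e \<otimes>\<^bsub>S\<^esub> s \<otimes>\<^bsub>S\<^esub> u}
                        = {f \<otimes>\<^bsub>S\<^esub> u | u. u \<in> carrier S}))"

definition is_meet :: "('m, 'b) monoid_scheme \<Rightarrow> 'm set \<Rightarrow> 'm \<Rightarrow> 'm \<Rightarrow> 'm \<Rightarrow> bool" where
  "is_meet S E e f m \<longleftrightarrow> m \<in> E \<and> le_l S m e \<and> le_l S m f \<and>
     (\<forall>k\<in>E. le_l S k e \<and> le_l S k f \<longrightarrow> le_l S k m)"

definition meet :: "('m, 'b) monoid_scheme \<Rightarrow> 'm set \<Rightarrow> 'm \<Rightarrow> 'm \<Rightarrow> 'm" where
  "meet S E e f = (THE m. is_meet S E e f m)"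

text \<open>the element e\<cdot>t of (J1); unique when E is left pre-reduced\<close>
definition dot :: "('m, 'b) monoid_scheme \<Rightarrow> 'm set \<Rightarrow> 'm \<Rightarrow> 'm \<Rightarrow> 'm" where
  "dot S E e t = (THE g. g \<in> E \<and> (\<forall>s\<in>carrier S.
       (e \<otimes>\<^bsub>S\<^esub> t \<otimes>\<^bsub>S\<^esub> s = t \<otimes>\<^bsub>S\<^esub> s \<longleftrightarrow> g \<otimes>\<^bsub>S\<^esub> s = s)))"

definition inductive_right_E_monoid :: "('m, 'b) monoid_scheme \<Rightarrow> 'm set \<Rightarrow> bool" where
  "inductive_right_E_monoid S E \<longleftrightarrow> monoid S \<and> \<one>\<^bsub>S\<^esub> \<in> E \<and> E \<subseteq> idems S \<and>
     left_pre_reduced S E \<and>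
     (\<forall>e\<in>E. \<forall>f\<in>E. \<exists>m. is_meet S E e f m) \<and>
     (\<forall>t\<in>carrier S. \<forall>e\<in>E. \<exists>g\<in>E. \<forall>s\<in>carrier S.
        (e \<otimes>\<^bsub>S\<^esub> t \<otimes>\<^bsub>S\<^esub> s = t \<otimes>\<^bsub>S\<^esub> s \<longleftrightarrow> g \<otimes>\<^bsub>S\<^esub> s = s)) \<and>
     (\<forall>s\<in>carrier S. \<forall>e\<in>E. \<forall>f\<in>E.
        e \<otimes>\<^bsub>S\<^esub> s = s \<and> f \<otimes>\<^bsub>S\<^esub> s = s \<longrightarrow> meet S E e f \<otimes>\<^bsub>S\<^esub> s = s)"

definition RRest_carrier :: "('m, 'b) monoid_scheme \<Rightarrow> 'm set \<Rightarrow> ('m \<times> 'm) set" where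
  "RRest_carrier S E = {(s, e). s \<in> carrier S \<and> e \<in> E \<and> s \<otimes>\<^bsub>S\<^esub> e = s}"

definition RRest_mult :: "('m, 'b) monoid_scheme \<Rightarrow> 'm set \<Rightarrow> 'm \<times> 'm \<Rightarrow> 'm \<times> 'm \<Rightarrow> 'm \<times> 'm" where
  "RRest_mult S E p q = (case p of (s, e) \<Rightarrow> case q of (t, f) \<Rightarrow>
      (let g = meet S E (dot S E e t) f in (s \<otimes>\<^bsub>S\<^esub> t \<otimes>\<^bsub>S\<^esub> g, g)))"

definition RRest_R :: "'m \<times> 'm \<Rightarrow> 'm \<times> 'm" where
  "RRest_R p = (case p of (s, e) \<Rightarrow> (e, e))"

section \<open>The full transformation monoid T_X (maps composed left to right)\<close>

definition TX :: "'a set \<Rightarrow> ('a \<Rightarrow> 'a) monoid" where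
  "TX A = \<lparr>carrier = A \<rightarrow>\<^sub>E A, mult = (\<lambda>s t. compose A t s), one = (\<lambda>x\<in>A. x)\<rparr>"

text \<open>Und x = x \<in> X, Pr x = x' \<in> X', DPr x = x'' \<in> X''\<close>
datatype 'a pt = Und 'a | Pr 'a | DPr 'a

definition base :: "'a set \<Rightarrow> 'a pt set" where
  "base A = Und ` A \<union> Pr ` A"

definition partitions :: "'a set \<Rightarrow> 'a pt set set set" where
  "partitions A = {P. partition_on (base A) P}"

fun down_pt :: "'a pt \<Rightarrow> 'a pt" where
  "down_pt (Und x) = Und x" | "down_pt (Pr x) = DPr x" | "down_pt (DPr x) = DPr x"

fun up_pt :: "'a pt \<Rightarrow> 'a pt" where
  "up_pt (Und x) = DPr x" | "up_pt (Pr x) = Pr x" | "up_pt (DPr x) = DPr x"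

text \<open>adjacency in the graph on X \<union> X'' \<union> X'\<close>
definition pconn :: "'a pt set set \<Rightarrow> 'a pt set set \<Rightarrow> 'a pt \<Rightarrow> 'a pt \<Rightarrow> bool" where
  "pconn \<alpha> \<beta> u v \<longleftrightarrow> (\<exists>B \<in> (image down_pt ` \<alpha>) \<union> (image up_pt ` \<beta>). u \<in> B \<and> v \<in> B)"

definition pmult :: "'a set \<Rightarrow> 'a pt set set \<Rightarrow> 'a pt set set \<Rightarrow> 'a pt set set" where
  "pmult A \<alpha> \<beta> =
     {C \<inter> base A | C. \<exists>u \<in> Und ` A \<union> DPr ` A \<union> Pr ` A. C = {v. (pconn \<alpha> \<beta>)\<^sup>*\<^sup>* u v}} - {{}}"

definition left_total :: "'a set \<Rightarrow> 'a pt set set \<Rightarrow> bool" where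
  "left_total A \<rho> \<longleftrightarrow> (\<forall>x\<in>A. \<exists>B\<in>\<rho>. Und x \<in> B \<and> (\<exists>y\<in>A. Pr y \<in> B))"

definition Plt :: "'a set \<Rightarrow> 'a pt set set set" where
  "Plt A = {\<rho> \<in> partitions A. left_total A \<rho>}"

definition Rrel :: "'a set \<Rightarrow> 'a pt set set \<Rightarrow> ('a \<times> 'a) set" where
  "Rrel A \<rho> = {(x, y). x \<in> A \<and> y \<in> A \<and> (\<exists>B\<in>\<rho>. Pr x \<in> B \<and> Pr y \<in> B)}"

definition Rop :: "'a set \<Rightarrow> 'a pt set set \<Rightarrow> 'a pt set set" where
  "Rop A \<rho> = {Und ` C \<union> Pr ` C | C. C \<in> A // Rrel A \<rho>}"

end

theory Submission
  imports Defs
begin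

text \<open>
  Everything is governed by kernels. For idempotents of \<open>T\<^sub>X\<close> one has \<open>e \<le>\<^sub>l f\<close> iff
  \<open>ker f \<subseteq> ker e\<close>, and every equivalence on \<open>X\<close> is the kernel of an idempotent; so a
  maximal left pre-reduced \<open>E\<close> picks one idempotent per equivalence, meets in \<open>E\<close> are
  joins of equivalences, and \<open>e \<cdot> t\<close> is the idempotent whose kernel is generated by the
  pairs \<open>(t (e x), t x)\<close>. Right protomodality is the same computation: the solutions of
  \<open>s u = e s u\<close> are the maps whose kernel contains the equivalence generated by the pairs
  \<open>(s x, s (e x))\<close>.

  A left total partition \<open>\<rho>\<close> is determined by the equivalence \<open>K = R(\<rho>)\<close> on the
  primed points and by any map \<open>h\<close> sending \<open>x\<close> to some \<open>y\<close> with \<open>y'\<close> in the block of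
  \<open>x\<close>, which matters only modulo \<open>K\<close>; it is sent to \<open>(h e, e)\<close> where \<open>e\<close> is the member
  of \<open>E\<close> with kernel \<open>K\<close>. Multiplying partitions composes the maps and glues the blocks of
  the second factor along the \<open>h\<^sub>2\<close>-image of the first kernel, which is exactly the
  kernel of the meet \<open>(e\<^sub>1 \<cdot> t) \<and> e\<^sub>2\<close> in \<open>RRest(E, T\<^sub>X)\<close>.
\<close>

section \<open>Equivalence relations on a carrier\<close>

lemma equiv_refl: "equiv A K \<Longrightarrow> x \<in> A \<Longrightarrow> (x, x) \<in> K"
  by (auto elim: equivE dest: refl_onD)

lemma equiv_sym: "equiv A K \<Longrightarrow> (x, y) \<in> K \<Longrightarrow> (y, x) \<in> K"
  by (auto elim: equivE dest: symD)

lemma equiv_trans: "equiv A K \<Longrightarrow> (x, y) \<in> K \<Longrightarrow> (y, z) \<in> K \<Longrightarrow> (x, z) \<in> K"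
  by (auto elim: equivE dest: transD)

lemma equiv_memD: "equiv A K \<Longrightarrow> (x, y) \<in> K \<Longrightarrow> x \<in> A \<and> y \<in> A"
  by (auto dest: equiv_type)

definition block_rel :: "'b set set \<Rightarrow> ('b \<times> 'b) set" where
  "block_rel P = {(u, v). \<exists>B\<in>P. u \<in> B \<and> v \<in> B}"

lemma block_rel_quotient:
  assumes "equiv A K"
  shows "block_rel (A // K) = K"
  unfolding block_rel_def
proof safe
  fix x y B assume "B \<in> A // K" "x \<in> B" "y \<in> B"
  then show "(x, y) \<in> K"
    using assms in_quotient_imp_in_rel by fastforce
next
  fix x y assume "(x, y) \<in> K"
  with assms have "x \<in> K `` {x}" "y \<in> K `` {x}" "K `` {x} \<in> A // K"
    by (auto intro: equiv_refl quotientI dest: equiv_memD)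
  then show "\<exists>B\<in>A // K. x \<in> B \<and> y \<in> B"
    by blast
qed

definition ker_on :: "'a set \<Rightarrow> ('a \<Rightarrow> 'b) \<Rightarrow> ('a \<times> 'a) set" where
  "ker_on A f = {(x, y). x \<in> A \<and> y \<in> A \<and> f x = f y}"

lemma equiv_ker_on: "equiv A (ker_on A f)"
  by (rule equivI) (auto simp: ker_on_def refl_on_def sym_def trans_def)

definition equiv_closure :: "'a set \<Rightarrow> ('a \<times> 'a) set \<Rightarrow> ('a \<times> 'a) set" where
  "equiv_closure A R = \<Inter>{K. equiv A K \<and> R \<subseteq> K}"

lemma equiv_equiv_closure:
  assumes "R \<subseteq> A \<times> A"
  shows "equiv A (equiv_closure A R)"
proof (rule equivI)
  have "equiv A (A \<times> A)"
    by (rule equivI) (auto simp: refl_on_def sym_def trans_def)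
  with assms show "equiv_closure A R \<subseteq> A \<times> A"
    unfolding equiv_closure_def by blast
  show "refl_on A (equiv_closure A R)"
    by (auto simp: equiv_closure_def refl_on_def intro: equiv_refl)
  show "sym (equiv_closure A R)"
    by (auto simp: equiv_closure_def sym_def intro: equiv_sym)
  show "trans (equiv_closure A R)"
    unfolding equiv_closure_def trans_def by (blast intro: equiv_trans)
qed

lemma equiv_closure_incl: "R \<subseteq> equiv_closure A R"
  unfolding equiv_closure_def by blast

lemma equiv_closure_least: "equiv A K \<Longrightarrow> R \<subseteq> K \<Longrightarrow> equiv_closure A R \<subseteq> K"
  unfolding equiv_closure_def by blast

lemma equiv_closure_subset_iff: "equiv A K \<Longrightarrow> equiv_closure A R \<subseteq> K \<longleftrightarrow> R \<subseteq> K"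
  using equiv_closure_incl equiv_closure_least by blast

lemma equiv_closure_eqI:
  assumes "R \<subseteq> A \<times> A" "S \<subseteq> A \<times> A" "R \<subseteq> equiv_closure A S" "S \<subseteq> equiv_closure A R"
  shows "equiv_closure A R = equiv_closure A S"
  using assms equiv_equiv_closure equiv_closure_least by (metis subset_antisym)

lemma equiv_closure_Un_closure:
  assumes "R \<subseteq> A \<times> A" "S \<subseteq> A \<times> A"
  shows "equiv_closure A (equiv_closure A R \<union> S) = equiv_closure A (R \<union> S)"
proof (rule equiv_closure_eqI)
  have RS: "equiv A (equiv_closure A (R \<union> S))"
    using assms by (intro equiv_equiv_closure) blast
  have "equiv_closure A R \<subseteq> equiv_closure A (R \<union> S)"
    using equiv_closure_incl[of "R \<union> S" A] by (intro equiv_closure_least[OF RS]) blast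
  then show "equiv_closure A R \<union> S \<subseteq> equiv_closure A (R \<union> S)"
    using equiv_closure_incl[of "R \<union> S" A] by blast
  show "equiv_closure A R \<union> S \<subseteq> A \<times> A"
    using assms equiv_type[OF equiv_equiv_closure[OF assms(1)]] by blast
  show "R \<union> S \<subseteq> equiv_closure A (equiv_closure A R \<union> S)"
    using equiv_closure_incl[of R A] equiv_closure_incl[of "equiv_closure A R \<union> S" A] by blast
qed (use assms in blast)

lemma equiv_closure_pairs:
  "f \<in> A \<rightarrow> A \<Longrightarrow> g \<in> A \<rightarrow> A \<Longrightarrow> equiv A (equiv_closure A {(f x, g x) | x. x \<in> A})"
  by (rule equiv_equiv_closure) auto

lemma equiv_inv_image_Int:
  assumes r: "equiv X r" and f: "f ` A \<subseteq> X"
  shows "equiv A (inv_image r f \<inter> A \<times> A)"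
proof (rule equivI)
  show "refl_on A (inv_image r f \<inter> A \<times> A)"
    using f equiv_refl[OF r] by (auto simp: refl_on_def)
  show "sym (inv_image r f \<inter> A \<times> A)"
    using equiv_sym[OF r] by (auto simp: sym_def)
  show "trans (inv_image r f \<inter> A \<times> A)"
  proof (rule transI)
    fix x y z assume "(x, y) \<in> inv_image r f \<inter> A \<times> A" "(y, z) \<in> inv_image r f \<inter> A \<times> A"
    then show "(x, z) \<in> inv_image r f \<inter> A \<times> A"
      using equiv_trans[OF r] by auto
  qed
qed auto

section \<open>The transformation monoid\<close>

lemma TX_carrier: "carrier (TX A) = A \<rightarrow>\<^sub>E A"
  by (simp add: TX_def)

lemma TX_mult: "s \<otimes>\<^bsub>TX A\<^esub> t = compose A t s"
  by (simp add: TX_def)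

lemma TX_one: "\<one>\<^bsub>TX A\<^esub> = (\<lambda>x\<in>A. x)"
  by (simp add: TX_def)

lemma monoid_TX: "monoid (TX A)"
  by (rule monoidI)
     (auto simp: TX_def compose_def PiE_def Pi_def extensional_def fun_eq_iff)

lemma TX_mult_closed: "s \<in> A \<rightarrow>\<^sub>E A \<Longrightarrow> t \<in> A \<rightarrow>\<^sub>E A \<Longrightarrow> compose A t s \<in> A \<rightarrow>\<^sub>E A"
  by (auto simp: compose_def)

lemma compose_eq_iff: "compose A u p = compose A u q \<longleftrightarrow> (\<forall>x\<in>A. u (p x) = u (q x))"
proof
  assume "compose A u p = compose A u q"
  then show "\<forall>x\<in>A. u (p x) = u (q x)"
    by (metis compose_eq)
next
  assume "\<forall>x\<in>A. u (p x) = u (q x)"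
  then show "compose A u p = compose A u q"
    by (intro extensionalityI[OF compose_extensional compose_extensional]) (simp add: compose_eq)
qed

lemma TX_mult_eq_iff_closure:
  assumes "p \<in> A \<rightarrow> A" "q \<in> A \<rightarrow> A"
  shows "p \<otimes>\<^bsub>TX A\<^esub> u = q \<otimes>\<^bsub>TX A\<^esub> u \<longleftrightarrow>
    equiv_closure A {(p x, q x) | x. x \<in> A} \<subseteq> ker_on A u"
proof -
  have "p \<otimes>\<^bsub>TX A\<^esub> u = q \<otimes>\<^bsub>TX A\<^esub> u \<longleftrightarrow> {(p x, q x) | x. x \<in> A} \<subseteq> ker_on A u"
    using assms by (auto simp: TX_mult compose_eq_iff ker_on_def)
  then show ?thesis
    by (simp add: equiv_closure_subset_iff[OF equiv_ker_on])
qed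

lemma compose_self_eq_iff:
  "e \<in> A \<rightarrow>\<^sub>E A \<Longrightarrow> compose A e e = e \<longleftrightarrow> (\<forall>x\<in>A. e (e x) = e x)"
proof
  assume "compose A e e = e"
  then show "\<forall>x\<in>A. e (e x) = e x"
    by (metis compose_eq)
next
  assume "e \<in> A \<rightarrow>\<^sub>E A" "\<forall>x\<in>A. e (e x) = e x"
  then show "compose A e e = e"
    by (intro extensionalityI[OF compose_extensional]) (auto simp: compose_eq PiE_iff)
qed

lemma idems_TX: "e \<in> idems (TX A) \<longleftrightarrow> e \<in> A \<rightarrow>\<^sub>E A \<and> (\<forall>x\<in>A. e (e x) = e x)"
  using compose_self_eq_iff by (auto simp: idems_def TX_carrier TX_mult)

lemma equiv_closure_retraction_pairs:
  assumes "e \<in> A \<rightarrow> A" "\<And>x. x \<in> A \<Longrightarrow> e (e x) = e x"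
  shows "equiv_closure A {(e x, x) | x. x \<in> A} = ker_on A e"
proof
  show "equiv_closure A {(e x, x) | x. x \<in> A} \<subseteq> ker_on A e"
    using assms by (intro equiv_closure_least[OF equiv_ker_on]) (auto simp: ker_on_def)
  have R: "{(e x, x) | x. x \<in> A} \<subseteq> A \<times> A"
    using assms(1) by auto
  show "ker_on A e \<subseteq> equiv_closure A {(e x, x) | x. x \<in> A}"
  proof clarify
    fix x y assume "(x, y) \<in> ker_on A e"
    then have "x \<in> A" "y \<in> A" "e x = e y" by (auto simp: ker_on_def)
    moreover have "(e x, x) \<in> {(e x, x) | x. x \<in> A}" "(e y, y) \<in> {(e x, x) | x. x \<in> A}"
      using \<open>x \<in> A\<close> \<open>y \<in> A\<close> by blast+
    ultimately have "(e x, x) \<in> equiv_closure A {(e x, x) | x. x \<in> A}"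
      "(e x, y) \<in> equiv_closure A {(e x, x) | x. x \<in> A}"
      using equiv_closure_incl[of "{(e x, x) | x. x \<in> A}" A] by (auto simp only: subset_iff)
    then show "(x, y) \<in> equiv_closure A {(e x, x) | x. x \<in> A}"
      using equiv_trans[OF equiv_equiv_closure[OF R] equiv_sym[OF equiv_equiv_closure[OF R]]] by blast
  qed
qed

lemma TX_idem_mult_eq_iff:
  assumes "e \<in> idems (TX A)" "u \<in> A \<rightarrow>\<^sub>E A"
  shows "e \<otimes>\<^bsub>TX A\<^esub> u = u \<longleftrightarrow> ker_on A e \<subseteq> ker_on A u"
proof -
  have e: "e \<in> A \<rightarrow> A" "\<And>x. x \<in> A \<Longrightarrow> e (e x) = e x"
    using assms(1) by (auto simp: idems_TX)
  have one_u: "(\<lambda>x\<in>A. x) \<otimes>\<^bsub>TX A\<^esub> u = u"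
    using monoid.l_one[OF monoid_TX, of u A] assms(2) by (simp add: TX_carrier TX_one)
  have pairs: "{(e x, (\<lambda>x\<in>A. x) x) | x. x \<in> A} = {(e x, x) | x. x \<in> A}"
    by auto
  have "e \<otimes>\<^bsub>TX A\<^esub> u = (\<lambda>x\<in>A. x) \<otimes>\<^bsub>TX A\<^esub> u \<longleftrightarrow>
      equiv_closure A {(e x, (\<lambda>x\<in>A. x) x) | x. x \<in> A} \<subseteq> ker_on A u"
    using e(1) by (intro TX_mult_eq_iff_closure) auto
  then show ?thesis
    unfolding one_u pairs using equiv_closure_retraction_pairs[of e A, OF e] by simp
qed

lemma le_l_TX:
  assumes "e \<in> idems (TX A)" "k \<in> A \<rightarrow>\<^sub>E A"
  shows "le_l (TX A) k e \<longleftrightarrow> ker_on A e \<subseteq> ker_on A k"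
  using TX_idem_mult_eq_iff[OF assms] unfolding le_l_def by auto

lemma idems_TX_carrier: "e \<in> idems (TX A) \<Longrightarrow> e \<in> A \<rightarrow>\<^sub>E A"
  by (simp add: idems_TX)

lemma sim_l_TX:
  assumes "e \<in> idems (TX A)" "f \<in> idems (TX A)"
  shows "sim_l (TX A) e f \<longleftrightarrow> ker_on A e = ker_on A f"
  using le_l_TX[OF assms(1) idems_TX_carrier[OF assms(2)]]
    le_l_TX[OF assms(2) idems_TX_carrier[OF assms(1)]]
  unfolding sim_l_def by blast

definition class_retraction :: "'a set \<Rightarrow> ('a \<times> 'a) set \<Rightarrow> 'a \<Rightarrow> 'a" where
  "class_retraction A K = (\<lambda>x\<in>A. SOME y. y \<in> K `` {x})"

lemma class_retraction:
  assumes K: "equiv A K"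
  shows "class_retraction A K \<in> idems (TX A)" "ker_on A (class_retraction A K) = K"
proof -
  let ?r = "class_retraction A K"
  have rel: "(x, ?r x) \<in> K" if "x \<in> A" for x
    using someI[of "\<lambda>y. y \<in> K `` {x}", OF equiv_class_self[OF K that]] that
    by (simp add: class_retraction_def)
  have cong: "?r x = ?r y" if "(x, y) \<in> K" for x y
  proof -
    have "K `` {x} = K `` {y}"
      using equiv_class_eq_iff[OF K] that by blast
    then show ?thesis
      using equiv_memD[OF K that] unfolding class_retraction_def by (simp only: restrict_apply')
  qed
  have "?r \<in> A \<rightarrow>\<^sub>E A"
    using equiv_memD[OF K rel] by (simp add: class_retraction_def PiE_iff)
  moreover have "?r (?r x) = ?r x" if "x \<in> A" for x
    using cong[OF equiv_sym[OF K rel[OF that]]] by simp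
  ultimately show "?r \<in> idems (TX A)"
    by (simp add: idems_TX)
  show "ker_on A ?r = K"
  proof
    show "ker_on A ?r \<subseteq> K"
    proof clarify
      fix x y assume "(x, y) \<in> ker_on A ?r"
      then have "x \<in> A" "y \<in> A" "?r x = ?r y"
        by (auto simp: ker_on_def)
      then show "(x, y) \<in> K"
        using rel equiv_sym[OF K] equiv_trans[OF K] by metis
    qed
    show "K \<subseteq> ker_on A ?r"
      using cong equiv_memD[OF K] by (auto simp: ker_on_def)
  qed
qed

lemma (in monoid) idem_fixed_points_eq_right_ideal:
  assumes "f \<in> idems G"
  shows "{u \<in> carrier G. f \<otimes> u = u} = {f \<otimes> u | u. u \<in> carrier G}"
proof -
  have f: "f \<in> carrier G" "f \<otimes> f = f"
    using assms by (auto simp: idems_def)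
  show ?thesis
  proof (intro equalityI subsetI)
    fix u assume "u \<in> {u \<in> carrier G. f \<otimes> u = u}"
    then show "u \<in> {f \<otimes> u | u. u \<in> carrier G}"
      by force
  next
    fix w assume "w \<in> {f \<otimes> u | u. u \<in> carrier G}"
    then obtain u where "u \<in> carrier G" "w = f \<otimes> u"
      by blast
    then show "w \<in> {u \<in> carrier G. f \<otimes> u = u}"
      using f by (simp flip: m_assoc)
  qed
qed

theorem right_protomodal_TX: "right_protomodal (TX A)"
  unfolding right_protomodal_def
proof (intro conjI ballI monoid_TX)
  fix e s assume e: "e \<in> idems (TX A)" and s: "s \<in> carrier (TX A)"
  let ?R = "{(s x, (e \<otimes>\<^bsub>TX A\<^esub> s) x) | x. x \<in> A}"
  have es: "e \<otimes>\<^bsub>TX A\<^esub> s \<in> A \<rightarrow>\<^sub>E A" "s \<in> A \<rightarrow>\<^sub>E A"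
    using TX_mult_closed[OF idems_TX_carrier[OF e]] s by (simp_all add: TX_carrier TX_mult)
  then have "equiv A (equiv_closure A ?R)"
    by (intro equiv_equiv_closure) auto
  then obtain f where f: "f \<in> idems (TX A)" "ker_on A f = equiv_closure A ?R"
    using class_retraction by blast
  have "s \<otimes>\<^bsub>TX A\<^esub> u = e \<otimes>\<^bsub>TX A\<^esub> s \<otimes>\<^bsub>TX A\<^esub> u \<longleftrightarrow> f \<otimes>\<^bsub>TX A\<^esub> u = u"
    if "u \<in> A \<rightarrow>\<^sub>E A" for u
    using TX_mult_eq_iff_closure[of s A "e \<otimes>\<^bsub>TX A\<^esub> s" u] TX_idem_mult_eq_iff[OF f(1) that]
      es f(2) by (simp add: PiE_iff)
  then have "{u \<in> carrier (TX A). s \<otimes>\<^bsub>TX A\<^esub> u = e \<otimes>\<^bsub>TX A\<^esub> s \<otimes>\<^bsub>TX A\<^esub> u}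
      = {u \<in> carrier (TX A). f \<otimes>\<^bsub>TX A\<^esub> u = u}"
    by (auto simp: TX_carrier)
  also have "\<dots> = {f \<otimes>\<^bsub>TX A\<^esub> u | u. u \<in> carrier (TX A)}"
    by (rule monoid.idem_fixed_points_eq_right_ideal[OF monoid_TX f(1)])
  finally show "\<exists>f\<in>idems (TX A). {u \<in> carrier (TX A). s \<otimes>\<^bsub>TX A\<^esub> u = e \<otimes>\<^bsub>TX A\<^esub> s \<otimes>\<^bsub>TX A\<^esub> u}
      = {f \<otimes>\<^bsub>TX A\<^esub> u | u. u \<in> carrier (TX A)}"
    using f(1) by blast
  with monoid.one_closed[OF monoid_TX]
  show "{u \<in> carrier (TX A). s \<otimes>\<^bsub>TX A\<^esub> u = e \<otimes>\<^bsub>TX A\<^esub> s \<otimes>\<^bsub>TX A\<^esub> u} \<noteq> {}"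
    by blast
qed

section \<open>Maximal left pre-reduced sets of idempotents\<close>

locale TX_transversal =
  fixes A :: "'a set" and E :: "('a \<Rightarrow> 'a) set"
  assumes max_lpr: "max_left_pre_reduced (TX A) E"
begin

lemma E_idems: "E \<subseteq> idems (TX A)"
  using max_lpr by (simp add: max_left_pre_reduced_def)

lemma E_carrier: "e \<in> E \<Longrightarrow> e \<in> A \<rightarrow>\<^sub>E A"
  using E_idems idems_TX_carrier by blast

lemma E_mult_eq_iff:
  "e \<in> E \<Longrightarrow> u \<in> A \<rightarrow>\<^sub>E A \<Longrightarrow> e \<otimes>\<^bsub>TX A\<^esub> u = u \<longleftrightarrow> ker_on A e \<subseteq> ker_on A u"
  using TX_idem_mult_eq_iff[OF subsetD[OF E_idems]] .

lemma E_le_l_iff: "k \<in> E \<Longrightarrow> e \<in> E \<Longrightarrow> le_l (TX A) k e \<longleftrightarrow> ker_on A e \<subseteq> ker_on A k"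
  using le_l_TX[OF subsetD[OF E_idems] E_carrier] .

lemma E_ker_inj:
  assumes "e \<in> E" "f \<in> E" "ker_on A e = ker_on A f"
  shows "e = f"
proof -
  have "e \<in> idems (TX A)" "f \<in> idems (TX A)"
    using assms E_idems by auto
  then have "sim_l (TX A) e e" "sim_l (TX A) e f"
    using assms(3) sim_l_TX by blast+
  then show ?thesis
    using max_lpr \<open>e \<in> idems (TX A)\<close> assms(1,2) unfolding max_left_pre_reduced_def by blast
qed

lemma ex_E_ker:
  assumes "equiv A K"
  shows "\<exists>e\<in>E. ker_on A e = K"
proof -
  have r: "class_retraction A K \<in> idems (TX A)" "ker_on A (class_retraction A K) = K"
    using class_retraction[OF assms] by auto
  then obtain f where "f \<in> E" "sim_l (TX A) (class_retraction A K) f"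
    using max_lpr unfolding max_left_pre_reduced_def by blast
  then show ?thesis
    using sim_l_TX[OF r(1)] E_idems r(2) by auto
qed

definition idem_of :: "('a \<times> 'a) set \<Rightarrow> 'a \<Rightarrow> 'a" where
  "idem_of K = (THE e. e \<in> E \<and> ker_on A e = K)"

lemma idem_of:
  assumes "equiv A K"
  shows "idem_of K \<in> E" "ker_on A (idem_of K) = K"
proof -
  have unique: "\<exists>!e. e \<in> E \<and> ker_on A e = K"
    using ex_E_ker[OF assms] E_ker_inj by blast
  show "idem_of K \<in> E" "ker_on A (idem_of K) = K"
    unfolding idem_of_def using theI'[OF unique] by blast+
qed

lemma idem_of_ker: "e \<in> E \<Longrightarrow> idem_of (ker_on A e) = e"
  using idem_of[OF equiv_ker_on] E_ker_inj by blast

lemma idem_of_eq_iff: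
  "equiv A K \<Longrightarrow> x \<in> A \<Longrightarrow> y \<in> A \<Longrightarrow> idem_of K x = idem_of K y \<longleftrightarrow> (x, y) \<in> K"
  using idem_of(2)[of K] by (auto simp: ker_on_def)

lemma E_ker_rel:
  assumes "e \<in> E" "x \<in> A"
  shows "(e x, x) \<in> ker_on A e"
proof -
  have "e \<in> idems (TX A)"
    using assms(1) E_idems by blast
  then have "e \<in> A \<rightarrow>\<^sub>E A" "e (e x) = e x"
    using assms(2) by (auto simp: idems_TX)
  then show ?thesis
    using assms(2) by (auto simp: ker_on_def)
qed

lemma idem_of_rel: "equiv A K \<Longrightarrow> x \<in> A \<Longrightarrow> (idem_of K x, x) \<in> K"
  using E_ker_rel[OF idem_of(1)] idem_of(2) by blast

lemma idem_of_idem: "equiv A K \<Longrightarrow> x \<in> A \<Longrightarrow> idem_of K (idem_of K x) = idem_of K x"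
  using E_idems idem_of(1)[of K] by (auto simp: idems_TX)

lemma one_in_E: "\<one>\<^bsub>TX A\<^esub> \<in> E"
proof -
  obtain f where f: "f \<in> E" "ker_on A f = ker_on A (\<lambda>x\<in>A. x)"
    using ex_E_ker[OF equiv_ker_on] by blast
  have "f = (\<lambda>x\<in>A. x)"
  proof (rule extensionalityI)
    show "f \<in> extensional A"
      using E_carrier[OF f(1)] by (simp add: PiE_iff)
    show "f x = (\<lambda>x\<in>A. x) x" if "x \<in> A" for x
      using E_ker_rel[OF f(1) that] that unfolding f(2) by (auto simp: ker_on_def)
  qed simp
  then show ?thesis
    using f(1) by (simp add: TX_one)
qed


lemma E_antisym:
  assumes "e \<in> E" "f \<in> E" "le_l (TX A) e f" "le_l (TX A) f e"
  shows "e = f"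
proof (rule E_ker_inj[OF assms(1,2)])
  show "ker_on A e = ker_on A f"
    using assms(3,4) unfolding E_le_l_iff[OF assms(1,2)] E_le_l_iff[OF assms(2,1)]
    by (rule subset_antisym[rotated])
qed

lemma left_pre_reduced_E: "left_pre_reduced (TX A) E"
  unfolding left_pre_reduced_def
proof (intro conjI ballI impI E_idems)
  fix e f assume "e \<in> E" "f \<in> E" "e = f \<otimes>\<^bsub>TX A\<^esub> e \<and> f = e \<otimes>\<^bsub>TX A\<^esub> f"
  then show "e = f"
    by (intro E_antisym) (simp_all add: le_l_def)
qed

lemma is_meet_E:
  assumes "e \<in> E" "f \<in> E"
  shows "is_meet (TX A) E e f (idem_of (equiv_closure A (ker_on A e \<union> ker_on A f)))"
proof -
  let ?K = "equiv_closure A (ker_on A e \<union> ker_on A f)"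
  have "equiv A ?K"
    by (rule equiv_equiv_closure) (auto simp: ker_on_def)
  then have m: "idem_of ?K \<in> E" "ker_on A (idem_of ?K) = ?K"
    using idem_of by blast+
  have below: "le_l (TX A) k (idem_of ?K) \<longleftrightarrow> ker_on A e \<union> ker_on A f \<subseteq> ker_on A k"
    if "k \<in> E" for k
    using E_le_l_iff[OF that m(1)] m(2) by (simp add: equiv_closure_subset_iff[OF equiv_ker_on])
  have lower: "le_l (TX A) k e \<and> le_l (TX A) k f \<longleftrightarrow> ker_on A e \<union> ker_on A f \<subseteq> ker_on A k"
    if "k \<in> E" for k
    by (simp add: E_le_l_iff[OF that assms(1)] E_le_l_iff[OF that assms(2)])
  have "ker_on A e \<union> ker_on A f \<subseteq> ker_on A (idem_of ?K)"
    unfolding m(2) by (rule equiv_closure_incl)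
  then show ?thesis
    unfolding is_meet_def using m(1) below lower by simp
qed

lemma meet_E:
  assumes "e \<in> E" "f \<in> E"
  shows "meet (TX A) E e f = idem_of (equiv_closure A (ker_on A e \<union> ker_on A f))"
  unfolding meet_def
proof (rule the_equality)
  let ?m = "idem_of (equiv_closure A (ker_on A e \<union> ker_on A f))"
  show "is_meet (TX A) E e f ?m"
    by (rule is_meet_E[OF assms])
  fix m assume "is_meet (TX A) E e f m"
  then have "m \<in> E" "le_l (TX A) m ?m" "le_l (TX A) ?m m"
    using is_meet_E[OF assms] unfolding is_meet_def by blast+
  then show "m = ?m"
    using E_antisym is_meet_E[OF assms] unfolding is_meet_def by blast
qed

lemma dot_fixes_iff:
  assumes e: "e \<in> E" and t: "t \<in> A \<rightarrow>\<^sub>E A" and s: "s \<in> A \<rightarrow>\<^sub>E A"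
  shows "e \<otimes>\<^bsub>TX A\<^esub> t \<otimes>\<^bsub>TX A\<^esub> s = t \<otimes>\<^bsub>TX A\<^esub> s \<longleftrightarrow>
    idem_of (equiv_closure A {(t (e x), t x) | x. x \<in> A}) \<otimes>\<^bsub>TX A\<^esub> s = s"
proof -
  let ?R = "{(t (e x), t x) | x. x \<in> A}"
  have eA: "e \<in> A \<rightarrow>\<^sub>E A"
    by (rule E_carrier[OF e])
  have "equiv A (equiv_closure A ?R)"
    using eA t by (intro equiv_closure_pairs) (auto simp: PiE_iff)
  then have g: "idem_of (equiv_closure A ?R) \<in> E" "ker_on A (idem_of (equiv_closure A ?R)) = equiv_closure A ?R"
    using idem_of by blast+
  have "{((e \<otimes>\<^bsub>TX A\<^esub> t) x, t x) | x. x \<in> A} = ?R"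
    by (force simp: TX_mult compose_eq)
  moreover have "e \<otimes>\<^bsub>TX A\<^esub> t \<in> A \<rightarrow> A"
    using TX_mult_closed[OF eA t] by (simp add: TX_mult PiE_iff)
  ultimately have "e \<otimes>\<^bsub>TX A\<^esub> t \<otimes>\<^bsub>TX A\<^esub> s = t \<otimes>\<^bsub>TX A\<^esub> s \<longleftrightarrow> equiv_closure A ?R \<subseteq> ker_on A s"
    using TX_mult_eq_iff_closure[of "e \<otimes>\<^bsub>TX A\<^esub> t" A t s] t by (simp add: PiE_iff)
  also have "\<dots> \<longleftrightarrow> idem_of (equiv_closure A ?R) \<otimes>\<^bsub>TX A\<^esub> s = s"
    using E_mult_eq_iff[OF g(1) s] g(2) by simp
  finally show ?thesis .
qed

lemma dot_E:
  assumes e: "e \<in> E" and t: "t \<in> A \<rightarrow>\<^sub>E A"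
  shows "dot (TX A) E e t = idem_of (equiv_closure A {(t (e x), t x) | x. x \<in> A})"
  unfolding dot_def
proof (rule the_equality)
  let ?g = "idem_of (equiv_closure A {(t (e x), t x) | x. x \<in> A})"
  have "equiv A (equiv_closure A {(t (e x), t x) | x. x \<in> A})"
    using E_carrier[OF e] t by (intro equiv_closure_pairs) (auto simp: PiE_iff)
  then have g: "?g \<in> E"
    by (rule idem_of)
  show "?g \<in> E \<and> (\<forall>s\<in>carrier (TX A).
      (e \<otimes>\<^bsub>TX A\<^esub> t \<otimes>\<^bsub>TX A\<^esub> s = t \<otimes>\<^bsub>TX A\<^esub> s) = (?g \<otimes>\<^bsub>TX A\<^esub> s = s))"
    using g dot_fixes_iff[OF e t] by (simp add: TX_carrier)
  fix g' assume g': "g' \<in> E \<and> (\<forall>s\<in>carrier (TX A).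
      (e \<otimes>\<^bsub>TX A\<^esub> t \<otimes>\<^bsub>TX A\<^esub> s = t \<otimes>\<^bsub>TX A\<^esub> s) = (g' \<otimes>\<^bsub>TX A\<^esub> s = s))"
  then have same: "?g \<otimes>\<^bsub>TX A\<^esub> s = s \<longleftrightarrow> g' \<otimes>\<^bsub>TX A\<^esub> s = s" if "s \<in> A \<rightarrow>\<^sub>E A" for s
    using dot_fixes_iff[OF e t that] that by (simp add: TX_carrier)
  have idem: "h \<otimes>\<^bsub>TX A\<^esub> h = h" if "h \<in> E" for h
    using that E_idems by (auto simp: idems_def)
  show "g' = ?g"
    using same[OF E_carrier[OF g]] same[OF E_carrier[of g']] idem[OF g] idem[of g'] g' g
    by (intro E_antisym) (auto simp: le_l_def)
qed

theorem inductive_right_E_monoid_TX: "inductive_right_E_monoid (TX A) E"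
  unfolding inductive_right_E_monoid_def
proof (intro conjI ballI impI monoid_TX one_in_E E_idems left_pre_reduced_E)
  fix e f assume "e \<in> E" "f \<in> E"
  then show "\<exists>m. is_meet (TX A) E e f m"
    using is_meet_E by blast
next
  fix t e assume t: "t \<in> carrier (TX A)" and e: "e \<in> E"
  let ?K = "equiv_closure A {(t (e x), t x) | x. x \<in> A}"
  have "equiv A ?K"
    using E_carrier[OF e] t by (intro equiv_closure_pairs) (auto simp: TX_carrier PiE_iff)
  then have "idem_of ?K \<in> E"
    by (rule idem_of)
  then show "\<exists>g\<in>E. \<forall>s\<in>carrier (TX A).
      (e \<otimes>\<^bsub>TX A\<^esub> t \<otimes>\<^bsub>TX A\<^esub> s = t \<otimes>\<^bsub>TX A\<^esub> s) = (g \<otimes>\<^bsub>TX A\<^esub> s = s)"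
    using dot_fixes_iff[OF e] t by (auto simp: TX_carrier)
next
  fix s e f assume s: "s \<in> carrier (TX A)" and ef: "e \<in> E" "f \<in> E"
    and fix_s: "e \<otimes>\<^bsub>TX A\<^esub> s = s \<and> f \<otimes>\<^bsub>TX A\<^esub> s = s"
  let ?K = "equiv_closure A (ker_on A e \<union> ker_on A f)"
  have sA: "s \<in> A \<rightarrow>\<^sub>E A"
    using s by (simp add: TX_carrier)
  have "equiv A ?K"
    by (rule equiv_equiv_closure) (auto simp: ker_on_def)
  then have m: "idem_of ?K \<in> E" "ker_on A (idem_of ?K) = ?K"
    using idem_of by blast+
  have "ker_on A e \<union> ker_on A f \<subseteq> ker_on A s"
    using fix_s E_mult_eq_iff[OF ef(1) sA] E_mult_eq_iff[OF ef(2) sA] by simp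
  then show "meet (TX A) E e f \<otimes>\<^bsub>TX A\<^esub> s = s"
    using meet_E[OF ef] E_mult_eq_iff[OF m(1) sA] m(2)
    by (simp add: equiv_closure_subset_iff[OF equiv_ker_on])
qed

end

section \<open>Left total partitions\<close>

lemma Plt_quotient: "\<rho> \<in> Plt A \<Longrightarrow> base A // block_rel \<rho> = \<rho>"
  using partition_on_eq_quotient[of "base A" \<rho>] by (simp add: Plt_def partitions_def block_rel_def)

lemma Plt_equiv_block_rel: "\<rho> \<in> Plt A \<Longrightarrow> equiv (base A) (block_rel \<rho>)"
  using equiv_partition_on[of "base A" \<rho>] by (simp add: Plt_def partitions_def block_rel_def)

lemma Und_in_base [simp]: "Und x \<in> base A \<longleftrightarrow> x \<in> A"
  and Pr_in_base [simp]: "Pr x \<in> base A \<longleftrightarrow> x \<in> A"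
  and DPr_notin_base [simp]: "DPr x \<notin> base A"
  by (auto simp: base_def)

lemma baseE:
  assumes "v \<in> base A"
  obtains x where "v = Und x" "x \<in> A" | x where "v = Pr x" "x \<in> A"
  using assms by (auto simp: base_def)

text \<open>A left total partition given by an equivalence \<open>K\<close> and a map \<open>h\<close> has one block
  \<open>C' \<union> h\<^sup>-\<^sup>1 C\<close> for each \<open>K\<close>-class \<open>C\<close>; a point belongs to the block of the class of its
  anchor.\<close>

fun anchor :: "('a \<Rightarrow> 'a) \<Rightarrow> 'a pt \<Rightarrow> 'a" where
  "anchor h (Und x) = h x"
| "anchor h (Pr y) = y"
| "anchor h (DPr y) = y"

lemma anchor_in: "h \<in> A \<rightarrow> A \<Longrightarrow> v \<in> base A \<Longrightarrow> anchor h v \<in> A"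
  by (erule baseE) auto

definition anchor_equiv :: "'a set \<Rightarrow> ('a \<times> 'a) set \<Rightarrow> ('a \<Rightarrow> 'a) \<Rightarrow> ('a pt \<times> 'a pt) set" where
  "anchor_equiv A K h = inv_image K (anchor h) \<inter> base A \<times> base A"

definition lt_partition :: "'a set \<Rightarrow> ('a \<times> 'a) set \<Rightarrow> ('a \<Rightarrow> 'a) \<Rightarrow> 'a pt set set" where
  "lt_partition A K h = base A // anchor_equiv A K h"

context
  fixes A K h
  assumes K: "equiv A K" and h: "h \<in> A \<rightarrow> A"
begin

lemma equiv_anchor_equiv: "equiv (base A) (anchor_equiv A K h)"
  unfolding anchor_equiv_def using anchor_in[OF h] by (intro equiv_inv_image_Int[OF K]) blast

lemma anchor_equiv_Image:
  "v \<in> base A \<Longrightarrow> anchor_equiv A K h `` {v} = {w \<in> base A. (anchor h v, anchor h w) \<in> K}"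
  by (auto simp: anchor_equiv_def)

lemma block_rel_lt_partition: "block_rel (lt_partition A K h) = anchor_equiv A K h"
  unfolding lt_partition_def by (rule block_rel_quotient[OF equiv_anchor_equiv])

lemma lt_partition_in_Plt: "lt_partition A K h \<in> Plt A"
  unfolding Plt_def partitions_def
proof (intro CollectI conjI)
  show "partition_on (base A) (lt_partition A K h)"
    unfolding lt_partition_def by (rule partition_on_quotient[OF equiv_anchor_equiv])
  show "left_total A (lt_partition A K h)"
    unfolding left_total_def
  proof
    fix x assume x: "x \<in> A"
    then have "h x \<in> A"
      using h by blast
    with x have "Und x \<in> anchor_equiv A K h `` {Pr (h x)}" "Pr (h x) \<in> anchor_equiv A K h `` {Pr (h x)}"
      using equiv_refl[OF K \<open>h x \<in> A\<close>] by (simp_all add: anchor_equiv_def)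
    moreover have "anchor_equiv A K h `` {Pr (h x)} \<in> lt_partition A K h"
      unfolding lt_partition_def using \<open>h x \<in> A\<close> by (intro quotientI) simp
    ultimately show "\<exists>B\<in>lt_partition A K h. Und x \<in> B \<and> (\<exists>y\<in>A. Pr y \<in> B)"
      using \<open>h x \<in> A\<close> by blast
  qed
qed


end

lemma Rrel_eq_block_rel: "Rrel A \<rho> = inv_image (block_rel \<rho>) Pr \<inter> A \<times> A"
  unfolding Rrel_def block_rel_def inv_image_def by blast

lemma Rrel_lt_partition:
  assumes "equiv A K" "h \<in> A \<rightarrow> A"
  shows "Rrel A (lt_partition A K h) = K"
proof (intro subset_antisym subrelI)
  fix x y
  have "(x, y) \<in> Rrel A (lt_partition A K h) \<longleftrightarrow> (x, y) \<in> K"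
    using equiv_memD[OF assms(1), of x y]
    by (auto simp: Rrel_eq_block_rel block_rel_lt_partition[OF assms] anchor_equiv_def)
  then show "(x, y) \<in> Rrel A (lt_partition A K h) \<Longrightarrow> (x, y) \<in> K"
    "(x, y) \<in> K \<Longrightarrow> (x, y) \<in> Rrel A (lt_partition A K h)"
    by simp_all
qed

lemma lt_partition_cong:
  assumes K: "equiv A K" and hh': "\<And>x. x \<in> A \<Longrightarrow> (h x, h' x) \<in> K"
  shows "lt_partition A K h = lt_partition A K h'"
proof -
  have shift: "(anchor h v, anchor h' v) \<in> K" if "v \<in> base A" for v
    using that by (cases rule: baseE) (auto intro: hh' equiv_refl[OF K])
  have "(anchor h u, anchor h v) \<in> K \<longleftrightarrow> (anchor h' u, anchor h' v) \<in> K"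
    if "u \<in> base A" "v \<in> base A" for u v
  proof
    assume "(anchor h u, anchor h v) \<in> K"
    with equiv_sym[OF K shift[OF that(1)]] have "(anchor h' u, anchor h v) \<in> K"
      by (rule equiv_trans[OF K])
    then show "(anchor h' u, anchor h' v) \<in> K"
      using shift[OF that(2)] by (rule equiv_trans[OF K])
  next
    assume "(anchor h' u, anchor h' v) \<in> K"
    with shift[OF that(1)] have "(anchor h u, anchor h' v) \<in> K"
      by (rule equiv_trans[OF K])
    then show "(anchor h u, anchor h v) \<in> K"
      using equiv_sym[OF K shift[OF that(2)]] by (rule equiv_trans[OF K])
  qed
  then have "anchor_equiv A K h = anchor_equiv A K h'"
    unfolding anchor_equiv_def by auto
  then show ?thesis
    by (simp add: lt_partition_def)
qed


definition lt_target :: "'a set \<Rightarrow> 'a pt set set \<Rightarrow> 'a \<Rightarrow> 'a" where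
  "lt_target A \<rho> x = (SOME y. y \<in> A \<and> (Und x, Pr y) \<in> block_rel \<rho>)"

lemma lt_target:
  assumes "\<rho> \<in> Plt A" "x \<in> A"
  shows "lt_target A \<rho> x \<in> A" "(Und x, Pr (lt_target A \<rho> x)) \<in> block_rel \<rho>"
proof -
  have "left_total A \<rho>"
    using assms(1) by (simp add: Plt_def)
  then obtain B y where "B \<in> \<rho>" "Und x \<in> B" "y \<in> A" "Pr y \<in> B"
    using assms(2) unfolding left_total_def by blast
  then have "\<exists>y. y \<in> A \<and> (Und x, Pr y) \<in> block_rel \<rho>"
    unfolding block_rel_def by blast
  then have "lt_target A \<rho> x \<in> A \<and> (Und x, Pr (lt_target A \<rho> x)) \<in> block_rel \<rho>"
    unfolding lt_target_def by (rule someI_ex)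
  then show "lt_target A \<rho> x \<in> A" "(Und x, Pr (lt_target A \<rho> x)) \<in> block_rel \<rho>"
    by simp_all
qed

lemma lt_target_funcset: "\<rho> \<in> Plt A \<Longrightarrow> lt_target A \<rho> \<in> A \<rightarrow> A"
  by (simp add: Pi_iff lt_target(1))

lemma equiv_Rrel: "\<rho> \<in> Plt A \<Longrightarrow> equiv A (Rrel A \<rho>)"
  unfolding Rrel_eq_block_rel by (rule equiv_inv_image_Int[OF Plt_equiv_block_rel]) auto

lemma Plt_eq_lt_partition:
  assumes \<rho>: "\<rho> \<in> Plt A"
  shows "\<rho> = lt_partition A (Rrel A \<rho>) (lt_target A \<rho>)"
proof -
  let ?h = "lt_target A \<rho>"
  have r: "equiv (base A) (block_rel \<rho>)"
    by (rule Plt_equiv_block_rel[OF \<rho>])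
  have to_Pr: "(v, Pr (anchor ?h v)) \<in> block_rel \<rho>" if "v \<in> base A" for v
    using that by (cases rule: baseE) (simp_all add: lt_target[OF \<rho>] equiv_refl[OF r])
  have anchor: "anchor ?h v \<in> A" if "v \<in> base A" for v
    by (rule anchor_in[OF lt_target_funcset[OF \<rho>] that])
  have "block_rel \<rho> = anchor_equiv A (Rrel A \<rho>) ?h"
  proof (intro subset_antisym subrelI)
    fix u v assume uv: "(u, v) \<in> block_rel \<rho>"
    then have base: "u \<in> base A" "v \<in> base A"
      using equiv_memD[OF r] by blast+
    have "(Pr (anchor ?h u), Pr (anchor ?h v)) \<in> block_rel \<rho>"
      using equiv_trans[OF r equiv_trans[OF r equiv_sym[OF r to_Pr[OF base(1)]] uv] to_Pr[OF base(2)]] .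
    then show "(u, v) \<in> anchor_equiv A (Rrel A \<rho>) ?h"
      using base anchor by (simp add: anchor_equiv_def Rrel_eq_block_rel)
  next
    fix u v assume "(u, v) \<in> anchor_equiv A (Rrel A \<rho>) ?h"
    then have base: "u \<in> base A" "v \<in> base A"
      and "(Pr (anchor ?h u), Pr (anchor ?h v)) \<in> block_rel \<rho>"
      by (simp_all add: anchor_equiv_def Rrel_eq_block_rel)
    then show "(u, v) \<in> block_rel \<rho>"
      using equiv_trans[OF r equiv_trans[OF r to_Pr[OF base(1)]] equiv_sym[OF r to_Pr[OF base(2)]]]
      by blast
  qed
  then show ?thesis
    using Plt_quotient[OF \<rho>] by (simp add: lt_partition_def)
qed

lemma classes_eq_lt_partition_id:
  assumes K: "equiv A K"
  shows "{Und ` C \<union> Pr ` C | C. C \<in> A // K} = lt_partition A K (\<lambda>x. x)"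
proof -
  let ?G = "\<lambda>a. Und ` (K `` {a}) \<union> Pr ` (K `` {a})"
  have cls: "anchor_equiv A K (\<lambda>x. x) `` {v} = ?G (anchor (\<lambda>x. x) v)" if "v \<in> base A" for v
    using that equiv_type[OF K] by (auto simp: anchor_equiv_def elim!: baseE)
  have "lt_partition A K (\<lambda>x. x) = (\<lambda>v. ?G (anchor (\<lambda>x. x) v)) ` base A"
    unfolding lt_partition_def quotient_def using cls by auto
  also have "\<dots> = ?G ` (anchor (\<lambda>x. x) ` base A)"
    by (simp add: image_image)
  also have "anchor (\<lambda>x. x) ` base A = A"
    by (force simp: base_def)
  finally show ?thesis
    unfolding quotient_def by auto
qed

lemma Rop_eq_lt_partition: "\<rho> \<in> Plt A \<Longrightarrow> Rop A \<rho> = lt_partition A (Rrel A \<rho>) (\<lambda>x. x)"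
  unfolding Rop_def by (rule classes_eq_lt_partition_id[OF equiv_Rrel])

section \<open>Products of left total partitions\<close>

lemma pconn_iff:
  "pconn P Q u v \<longleftrightarrow>
     (\<exists>u' v'. (u', v') \<in> block_rel P \<and> u = down_pt u' \<and> v = down_pt v') \<or>
     (\<exists>u' v'. (u', v') \<in> block_rel Q \<and> u = up_pt u' \<and> v = up_pt v')"
proof
  assume "pconn P Q u v"
  then obtain B where "B \<in> image down_pt ` P \<union> image up_pt ` Q" "u \<in> B" "v \<in> B"
    unfolding pconn_def by blast
  then show "(\<exists>u' v'. (u', v') \<in> block_rel P \<and> u = down_pt u' \<and> v = down_pt v') \<or>
     (\<exists>u' v'. (u', v') \<in> block_rel Q \<and> u = up_pt u' \<and> v = up_pt v')"
    unfolding block_rel_def by blast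
next
  assume "(\<exists>u' v'. (u', v') \<in> block_rel P \<and> u = down_pt u' \<and> v = down_pt v') \<or>
     (\<exists>u' v'. (u', v') \<in> block_rel Q \<and> u = up_pt u' \<and> v = up_pt v')"
  then show "pconn P Q u v"
    unfolding pconn_def block_rel_def by blast
qed

lemma equivp_pconn_closure: "equivp (pconn P Q)\<^sup>*\<^sup>*"
  by (rule equivp_rtranclp) (auto simp: symp_def pconn_def)

text \<open>Anchors of the vertices \<open>x\<close>, \<open>y''\<close>, \<open>y'\<close> of the graph defining the product of the
  partitions given by \<open>(K\<^sub>1, h\<^sub>1)\<close> and \<open>(K\<^sub>2, h\<^sub>2)\<close>.\<close>

fun mid_anchor :: "('a \<Rightarrow> 'a) \<Rightarrow> ('a \<Rightarrow> 'a) \<Rightarrow> 'a pt \<Rightarrow> 'a" where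
  "mid_anchor h1 h2 (Und x) = h2 (h1 x)"
| "mid_anchor h1 h2 (DPr y) = h2 y"
| "mid_anchor h1 h2 (Pr y) = y"

definition lt_product_rel :: "'a set \<Rightarrow> ('a \<times> 'a) set \<Rightarrow> ('a \<times> 'a) set \<Rightarrow> ('a \<Rightarrow> 'a) \<Rightarrow> ('a \<times> 'a) set" where
  "lt_product_rel A K1 K2 h2 = equiv_closure A (K2 \<union> map_prod h2 h2 ` K1)"

locale lt_product =
  fixes A :: "'a set" and K1 K2 :: "('a \<times> 'a) set" and h1 h2 :: "'a \<Rightarrow> 'a"
  assumes K1: "equiv A K1" and K2: "equiv A K2" and h1: "h1 \<in> A \<rightarrow> A" and h2: "h2 \<in> A \<rightarrow> A"
begin

abbreviation "K3 \<equiv> lt_product_rel A K1 K2 h2"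
abbreviation "vertices \<equiv> Und ` A \<union> DPr ` A \<union> Pr ` A"
abbreviation "connected \<equiv> (pconn (lt_partition A K1 h1) (lt_partition A K2 h2))\<^sup>*\<^sup>*"

lemma generators_subset: "K2 \<union> map_prod h2 h2 ` K1 \<subseteq> A \<times> A"
proof (intro Un_least image_subsetI)
  show "K2 \<subseteq> A \<times> A"
    by (rule equiv_type[OF K2])
  fix p assume "p \<in> K1"
  then show "map_prod h2 h2 p \<in> A \<times> A"
    using equiv_type[OF K1] h2 by (cases p) (auto simp: Pi_iff)
qed

lemma equiv_K3: "equiv A K3"
  unfolding lt_product_rel_def by (rule equiv_equiv_closure[OF generators_subset])

lemma K2_K3: "(a, b) \<in> K2 \<Longrightarrow> (a, b) \<in> K3"
  unfolding lt_product_rel_def by (rule subsetD[OF equiv_closure_incl]) simp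

lemma K1_K3: "(a, b) \<in> K1 \<Longrightarrow> (h2 a, h2 b) \<in> K3"
proof -
  assume "(a, b) \<in> K1"
  then have "(h2 a, h2 b) \<in> map_prod h2 h2 ` K1"
    by (rule rev_image_eqI) simp
  then show ?thesis
    unfolding lt_product_rel_def by (rule subsetD[OF equiv_closure_incl, OF UnI2])
qed

lemma mid_anchor_down: "u \<in> base A \<Longrightarrow> mid_anchor h1 h2 (down_pt u) = h2 (anchor h1 u)"
  by (erule baseE) simp_all

lemma mid_anchor_up: "u \<in> base A \<Longrightarrow> mid_anchor h1 h2 (up_pt u) = anchor h2 u"
  by (erule baseE) simp_all

lemma down_up_vertices: "u \<in> base A \<Longrightarrow> down_pt u \<in> vertices \<and> up_pt u \<in> vertices"
  by (erule baseE) simp_all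

lemma mid_anchor_in: "u \<in> vertices \<Longrightarrow> mid_anchor h1 h2 u \<in> A"
  using h1 h2 by (auto simp: Pi_iff)

lemma pconn_mid_anchor:
  assumes "pconn (lt_partition A K1 h1) (lt_partition A K2 h2) u v"
  shows "u \<in> vertices \<and> v \<in> vertices \<and> (mid_anchor h1 h2 u, mid_anchor h1 h2 v) \<in> K3"
  using assms unfolding pconn_iff block_rel_lt_partition[OF K1 h1] block_rel_lt_partition[OF K2 h2]
proof (elim disjE exE conjE)
  fix u' v' assume "(u', v') \<in> anchor_equiv A K1 h1" "u = down_pt u'" "v = down_pt v'"
  moreover from this have "u' \<in> base A" "v' \<in> base A" "(anchor h1 u', anchor h1 v') \<in> K1"
    by (simp_all add: anchor_equiv_def)
  ultimately show ?thesis
    using K1_K3 down_up_vertices by (simp add: mid_anchor_down)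
next
  fix u' v' assume "(u', v') \<in> anchor_equiv A K2 h2" "u = up_pt u'" "v = up_pt v'"
  moreover from this have "u' \<in> base A" "v' \<in> base A" "(anchor h2 u', anchor h2 v') \<in> K2"
    by (simp_all add: anchor_equiv_def)
  ultimately show ?thesis
    using K2_K3 down_up_vertices by (simp add: mid_anchor_up)
qed

lemma connected_mid_anchor:
  assumes "connected u v" "u \<in> vertices"
  shows "v \<in> vertices \<and> (mid_anchor h1 h2 u, mid_anchor h1 h2 v) \<in> K3"
  using assms(1)
proof (induction rule: rtranclp_induct)
  case base
  show ?case
    using assms(2) equiv_refl[OF equiv_K3 mid_anchor_in] by blast
next
  case (step v w)
  then have "w \<in> vertices" "(mid_anchor h1 h2 v, mid_anchor h1 h2 w) \<in> K3"
    using pconn_mid_anchor by blast+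
  with step.IH show ?case
    using equiv_trans[OF equiv_K3] by blast
qed

lemma pconn_down:
  assumes "(u, v) \<in> anchor_equiv A K1 h1"
  shows "connected (down_pt u) (down_pt v)"
proof -
  have "pconn (lt_partition A K1 h1) (lt_partition A K2 h2) (down_pt u) (down_pt v)"
    unfolding pconn_iff block_rel_lt_partition[OF K1 h1]
    by (rule disjI1) (use assms in blast)
  then show ?thesis
    by (rule r_into_rtranclp)
qed

lemma pconn_up:
  assumes "(u, v) \<in> anchor_equiv A K2 h2"
  shows "connected (up_pt u) (up_pt v)"
proof -
  have "pconn (lt_partition A K1 h1) (lt_partition A K2 h2) (up_pt u) (up_pt v)"
    unfolding pconn_iff block_rel_lt_partition[OF K2 h2]
    by (rule disjI2) (use assms in blast)
  then show ?thesis
    by (rule r_into_rtranclp)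
qed

lemma connected_sym: "connected u v \<Longrightarrow> connected v u"
  by (rule equivp_symp[OF equivp_pconn_closure])

lemma connected_trans [trans]: "connected u v \<Longrightarrow> connected v w \<Longrightarrow> connected u w"
  by (rule equivp_transp[OF equivp_pconn_closure])

lemma connected_DPr:
  assumes "y \<in> A"
  shows "connected (DPr y) (Pr (h2 y))"
proof -
  have "h2 y \<in> A"
    using h2 assms by blast
  then have "(Und y, Pr (h2 y)) \<in> anchor_equiv A K2 h2"
    using assms equiv_refl[OF K2] by (simp add: anchor_equiv_def)
  from pconn_up[OF this] show ?thesis
    by simp
qed

lemma connected_Pr_mid_anchor:
  assumes "u \<in> vertices"
  shows "connected u (Pr (mid_anchor h1 h2 u))"
  using assms
proof (elim UnE imageE)
  fix x assume x: "x \<in> A" and u: "u = Und x"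
  then have "h1 x \<in> A"
    using h1 by blast
  then have "(Und x, Pr (h1 x)) \<in> anchor_equiv A K1 h1"
    using x equiv_refl[OF K1] by (simp add: anchor_equiv_def)
  from pconn_down[OF this] have "connected (Und x) (DPr (h1 x))"
    by simp
  then show ?thesis
    using connected_trans[OF _ connected_DPr[OF \<open>h1 x \<in> A\<close>]] u by simp
qed (simp_all add: connected_DPr)

lemma K3_connected:
  assumes "(a, b) \<in> K3"
  shows "connected (Pr a) (Pr b)"
proof -
  let ?Q = "inv_image {(u, v). connected u v} Pr \<inter> A \<times> A"
  have Q: "equiv A ?Q"
    using equivp_pconn_closure by (intro equiv_inv_image_Int[of UNIV]) (simp_all add: equivp_equiv)
  have "K2 \<subseteq> ?Q"
  proof (rule subrelI)
    fix a b assume ab: "(a, b) \<in> K2"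
    then have A: "a \<in> A" "b \<in> A"
      using equiv_memD[OF K2] by blast+
    with ab have "(Pr a, Pr b) \<in> anchor_equiv A K2 h2"
      by (simp add: anchor_equiv_def)
    from pconn_up[OF this] have "connected (Pr a) (Pr b)"
      by simp
    with A show "(a, b) \<in> ?Q"
      by simp
  qed
  moreover have "map_prod h2 h2 ` K1 \<subseteq> ?Q"
  proof (rule image_subsetI)
    fix p assume "p \<in> K1"
    then obtain a b where p: "p = (a, b)" and ab: "(a, b) \<in> K1"
      by (cases p) simp
    then have A: "a \<in> A" "b \<in> A"
      using equiv_memD[OF K1] by blast+
    with ab have "(Pr a, Pr b) \<in> anchor_equiv A K1 h1"
      by (simp add: anchor_equiv_def)
    have "connected (Pr (h2 a)) (DPr a)"
      by (rule connected_sym[OF connected_DPr[OF A(1)]])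
    also from pconn_down[OF \<open>(Pr a, Pr b) \<in> anchor_equiv A K1 h1\<close>] have "connected (DPr a) (DPr b)"
      by simp
    also have "connected (DPr b) (Pr (h2 b))"
      by (rule connected_DPr[OF A(2)])
    finally have "connected (Pr (h2 a)) (Pr (h2 b))" .
    moreover have "h2 a \<in> A" "h2 b \<in> A"
      using A h2 by blast+
    ultimately show "map_prod h2 h2 p \<in> ?Q"
      using p by simp
  qed
  ultimately have "K3 \<subseteq> ?Q"
    unfolding lt_product_rel_def by (rule equiv_closure_least[OF Q Un_least])
  with assms have "(a, b) \<in> ?Q"
    by (rule subsetD[rotated])
  then show ?thesis
    by simp
qed

lemma connected_iff:
  assumes "u \<in> vertices"
  shows "connected u v \<longleftrightarrow> v \<in> vertices \<and> (mid_anchor h1 h2 u, mid_anchor h1 h2 v) \<in> K3"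
proof
  assume v: "v \<in> vertices \<and> (mid_anchor h1 h2 u, mid_anchor h1 h2 v) \<in> K3"
  have "connected u (Pr (mid_anchor h1 h2 u))"
    by (rule connected_Pr_mid_anchor[OF assms])
  also have "connected \<dots> (Pr (mid_anchor h1 h2 v))"
    using K3_connected v by blast
  also have "connected \<dots> v"
    using connected_sym[OF connected_Pr_mid_anchor] v by blast
  finally show "connected u v" .
qed (rule connected_mid_anchor[OF _ assms])


lemma dot_generators_K3:
  assumes e: "\<And>x. x \<in> A \<Longrightarrow> e x \<in> A \<and> (e x, x) \<in> K1"
    and t: "\<And>x. x \<in> A \<Longrightarrow> (t x, h2 x) \<in> K2"
  shows "{(t (e x), t x) | x. x \<in> A} \<union> K2 \<subseteq> K3"
proof -
  have "(t (e x), t x) \<in> K3" if "x \<in> A" for x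
  proof -
    have "(t (e x), h2 (e x)) \<in> K3"
      using e[OF that] by (intro K2_K3 t) simp
    moreover have "(h2 (e x), h2 x) \<in> K3"
      using e[OF that] by (intro K1_K3) simp
    moreover have "(h2 x, t x) \<in> K3"
      by (rule K2_K3[OF equiv_sym[OF K2 t[OF that]]])
    ultimately show ?thesis
      using equiv_trans[OF equiv_K3] by meson
  qed
  moreover have "K2 \<subseteq> K3"
    using K2_K3 by (intro subrelI)
  ultimately show ?thesis
    by blast
qed

lemma K3_generators_dot_closure:
  assumes e: "ker_on A e = K1"
    and t: "\<And>x. x \<in> A \<Longrightarrow> (t x, h2 x) \<in> K2"
    and C: "equiv A (equiv_closure A ({(t (e x), t x) | x. x \<in> A} \<union> K2))"
  shows "K2 \<union> map_prod h2 h2 ` K1 \<subseteq> equiv_closure A ({(t (e x), t x) | x. x \<in> A} \<union> K2)"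
    (is "_ \<subseteq> ?C")
proof -
  have R_C: "(t (e x), t x) \<in> ?C" if "x \<in> A" for x
    using that by (intro subsetD[OF equiv_closure_incl]) blast
  have K2_C: "p \<in> K2 \<Longrightarrow> p \<in> ?C" for p
    by (rule subsetD[OF equiv_closure_incl]) simp
  have "(h2 a, h2 b) \<in> ?C" if ab: "(a, b) \<in> K1" for a b
  proof -
    have A: "a \<in> A" "b \<in> A" and "e a = e b"
      using ab by (auto simp: e[symmetric] ker_on_def)
    have "(t a, t (e a)) \<in> ?C"
      by (rule equiv_sym[OF C R_C[OF A(1)]])
    then have "(t a, t (e b)) \<in> ?C" "(t (e b), t b) \<in> ?C"
      using \<open>e a = e b\<close> R_C[OF A(2)] by simp_all
    moreover have "(h2 a, t a) \<in> ?C" "(t b, h2 b) \<in> ?C"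
      using K2_C equiv_sym[OF K2] t A by simp_all
    ultimately show ?thesis
      using equiv_trans[OF C] by meson
  qed
  then have "map_prod h2 h2 ` K1 \<subseteq> ?C"
    by auto
  moreover have "K2 \<subseteq> ?C"
    using K2_C by (intro subrelI)
  ultimately show ?thesis
    by (rule Un_least[rotated])
qed

lemma dot_closure_eq_K3:
  assumes e: "ker_on A e = K1" "\<And>x. x \<in> A \<Longrightarrow> e x \<in> A \<and> (e x, x) \<in> K1"
    and t: "t \<in> A \<rightarrow> A" "\<And>x. x \<in> A \<Longrightarrow> (t x, h2 x) \<in> K2"
  shows "equiv_closure A ({(t (e x), t x) | x. x \<in> A} \<union> K2) = K3"
proof -
  have R: "{(t (e x), t x) | x. x \<in> A} \<union> K2 \<subseteq> A \<times> A"
    using e(2) t(1) equiv_type[OF K2] by blast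
  show ?thesis
    unfolding lt_product_rel_def
  proof (rule equiv_closure_eqI[OF R generators_subset])
    show "{(t (e x), t x) | x. x \<in> A} \<union> K2 \<subseteq> equiv_closure A (K2 \<union> map_prod h2 h2 ` K1)"
      using dot_generators_K3[OF e(2) t(2)] unfolding lt_product_rel_def .
    show "K2 \<union> map_prod h2 h2 ` K1 \<subseteq> equiv_closure A ({(t (e x), t x) | x. x \<in> A} \<union> K2)"
      using K3_generators_dot_closure[OF e(1) t(2) equiv_equiv_closure[OF R]] .
  qed
qed

lemma mid_anchor_base: "v \<in> base A \<Longrightarrow> mid_anchor h1 h2 v = anchor (\<lambda>x. h2 (h1 x)) v"
  by (erule baseE) simp_all

lemma comp_funcset: "(\<lambda>x. h2 (h1 x)) \<in> A \<rightarrow> A"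
  using h1 h2 by (auto simp: Pi_iff)

lemma component_eq_class:
  assumes "u \<in> vertices"
  shows "{v. connected u v} \<inter> base A =
    anchor_equiv A K3 (\<lambda>x. h2 (h1 x)) `` {Pr (mid_anchor h1 h2 u)}"
proof -
  have "Pr (mid_anchor h1 h2 u) \<in> base A"
    using mid_anchor_in[OF assms] by simp
  then have "anchor_equiv A K3 (\<lambda>x. h2 (h1 x)) `` {Pr (mid_anchor h1 h2 u)}
      = {w \<in> base A. (mid_anchor h1 h2 u, anchor (\<lambda>x. h2 (h1 x)) w) \<in> K3}"
    by (simp add: anchor_equiv_Image[OF equiv_K3 comp_funcset])
  moreover have "v \<in> vertices" if "v \<in> base A" for v
    using that by (auto simp: base_def)
  ultimately show ?thesis
    by (auto simp: connected_iff[OF assms] mid_anchor_base)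
qed

lemma class_eq_class_Pr_anchor:
  assumes "v \<in> base A"
  shows "anchor_equiv A K3 (\<lambda>x. h2 (h1 x)) `` {v}
    = anchor_equiv A K3 (\<lambda>x. h2 (h1 x)) `` {Pr (anchor (\<lambda>x. h2 (h1 x)) v)}"
proof -
  have a: "anchor (\<lambda>x. h2 (h1 x)) v \<in> A"
    by (rule anchor_in[OF comp_funcset assms])
  then have "(v, Pr (anchor (\<lambda>x. h2 (h1 x)) v)) \<in> anchor_equiv A K3 (\<lambda>x. h2 (h1 x))"
    using assms equiv_refl[OF equiv_K3] by (simp add: anchor_equiv_def)
  then show ?thesis
    by (rule equiv_class_eq[OF equiv_anchor_equiv[OF equiv_K3 comp_funcset]])
qed

lemma components_eq_classes:
  "{C \<inter> base A | C. \<exists>u \<in> vertices. C = {v. connected u v}}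
    = (\<lambda>a. anchor_equiv A K3 (\<lambda>x. h2 (h1 x)) `` {Pr a}) ` A"
proof (intro equalityI subsetI)
  fix B assume "B \<in> {C \<inter> base A | C. \<exists>u \<in> vertices. C = {v. connected u v}}"
  then obtain u where u: "u \<in> vertices" and B: "B = {v. connected u v} \<inter> base A"
    by blast
  show "B \<in> (\<lambda>a. anchor_equiv A K3 (\<lambda>x. h2 (h1 x)) `` {Pr a}) ` A"
    unfolding B component_eq_class[OF u] using mid_anchor_in[OF u] by (rule imageI)
next
  fix B assume "B \<in> (\<lambda>a. anchor_equiv A K3 (\<lambda>x. h2 (h1 x)) `` {Pr a}) ` A"
  then obtain a where "a \<in> A" "B = anchor_equiv A K3 (\<lambda>x. h2 (h1 x)) `` {Pr a}"
    by blast
  then have "B = {v. connected (Pr a) v} \<inter> base A" "Pr a \<in> vertices"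
    using component_eq_class[of "Pr a"] by simp_all
  then show "B \<in> {C \<inter> base A | C. \<exists>u \<in> vertices. C = {v. connected u v}}"
    by (intro CollectI exI[of _ "{v. connected (Pr a) v}"] conjI bexI[of _ "Pr a"]) simp_all
qed

lemma lt_partition_K3_eq_classes:
  "lt_partition A K3 (\<lambda>x. h2 (h1 x)) = (\<lambda>a. anchor_equiv A K3 (\<lambda>x. h2 (h1 x)) `` {Pr a}) ` A"
proof (intro equalityI subsetI)
  fix B assume "B \<in> lt_partition A K3 (\<lambda>x. h2 (h1 x))"
  then obtain v where v: "v \<in> base A" and B: "B = anchor_equiv A K3 (\<lambda>x. h2 (h1 x)) `` {v}"
    unfolding lt_partition_def by (rule quotientE)
  show "B \<in> (\<lambda>a. anchor_equiv A K3 (\<lambda>x. h2 (h1 x)) `` {Pr a}) ` A"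
    unfolding B class_eq_class_Pr_anchor[OF v] using anchor_in[OF comp_funcset v] by (rule imageI)
next
  fix B assume "B \<in> (\<lambda>a. anchor_equiv A K3 (\<lambda>x. h2 (h1 x)) `` {Pr a}) ` A"
  then obtain a where "a \<in> A" "B = anchor_equiv A K3 (\<lambda>x. h2 (h1 x)) `` {Pr a}"
    by blast
  then show "B \<in> lt_partition A K3 (\<lambda>x. h2 (h1 x))"
    unfolding lt_partition_def using quotientI[of "Pr a" "base A"] by simp
qed

theorem pmult_lt_partition:
  "pmult A (lt_partition A K1 h1) (lt_partition A K2 h2) = lt_partition A K3 (\<lambda>x. h2 (h1 x))"
proof -
  have "Pr a \<in> anchor_equiv A K3 (\<lambda>x. h2 (h1 x)) `` {Pr a}" if "a \<in> A" for a
    using equiv_refl[OF equiv_anchor_equiv[OF equiv_K3 comp_funcset], of "Pr a"] that by simp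
  then have "(\<lambda>a. anchor_equiv A K3 (\<lambda>x. h2 (h1 x)) `` {Pr a}) ` A - {{}}
      = (\<lambda>a. anchor_equiv A K3 (\<lambda>x. h2 (h1 x)) `` {Pr a}) ` A"
    by blast
  then show ?thesis
    unfolding pmult_def components_eq_classes lt_partition_K3_eq_classes .
qed

end

section \<open>The isomorphism\<close>

context TX_transversal
begin

definition rrest_pair :: "('a \<times> 'a) set \<Rightarrow> ('a \<Rightarrow> 'a) \<Rightarrow> ('a \<Rightarrow> 'a) \<times> ('a \<Rightarrow> 'a)" where
  "rrest_pair K h = (compose A (idem_of K) h, idem_of K)"

definition lt_to_rrest :: "'a pt set set \<Rightarrow> ('a \<Rightarrow> 'a) \<times> ('a \<Rightarrow> 'a)" where
  "lt_to_rrest \<rho> = rrest_pair (Rrel A \<rho>) (lt_target A \<rho>)"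

lemma rrest_pair_in_carrier:
  assumes K: "equiv A K" and h: "h \<in> A \<rightarrow> A"
  shows "rrest_pair K h \<in> RRest_carrier (TX A) E"
proof -
  have e: "idem_of K \<in> E" "idem_of K \<in> A \<rightarrow>\<^sub>E A"
    using idem_of(1)[OF K] E_carrier by blast+
  have s: "compose A (idem_of K) h \<in> A \<rightarrow>\<^sub>E A"
    using e(2) h by (auto simp: compose_def)
  have "compose A (idem_of K) (compose A (idem_of K) h) = compose A (idem_of K) h"
    using h idem_of_idem[OF K]
    by (intro extensionalityI[OF compose_extensional compose_extensional]) (auto simp: compose_eq Pi_iff)
  then show ?thesis
    using e(1) s by (simp add: rrest_pair_def RRest_carrier_def TX_carrier TX_mult)
qed

lemma rrest_pair_eq_iff:
  assumes K: "equiv A K" and K': "equiv A K'" and h: "h \<in> A \<rightarrow> A" and h': "h' \<in> A \<rightarrow> A"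
  shows "rrest_pair K h = rrest_pair K' h' \<longleftrightarrow> K = K' \<and> (\<forall>x\<in>A. (h x, h' x) \<in> K)"
proof
  assume eq: "rrest_pair K h = rrest_pair K' h'"
  then have "idem_of K = idem_of K'"
    by (simp add: rrest_pair_def)
  then have KK': "K = K'"
    using idem_of(2)[OF K] idem_of(2)[OF K'] by metis
  have "compose A (idem_of K) h = compose A (idem_of K) h'"
    using eq by (simp add: rrest_pair_def KK')
  then have "idem_of K (h x) = idem_of K (h' x)" if "x \<in> A" for x
    using that by (simp add: compose_eq_iff)
  then show "K = K' \<and> (\<forall>x\<in>A. (h x, h' x) \<in> K)"
    using KK' h h' idem_of_eq_iff[OF K] by blast
next
  assume H: "K = K' \<and> (\<forall>x\<in>A. (h x, h' x) \<in> K)"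
  have "idem_of K (h x) = idem_of K (h' x)" if "x \<in> A" for x
    using idem_of_eq_iff[OF K funcset_mem[OF h that] funcset_mem[OF h' that]] H that by blast
  then show "rrest_pair K h = rrest_pair K' h'"
    using H by (simp add: rrest_pair_def compose_eq_iff)
qed

lemma lt_to_rrest_lt_partition:
  assumes K: "equiv A K" and h: "h \<in> A \<rightarrow> A"
  shows "lt_to_rrest (lt_partition A K h) = rrest_pair K h"
proof -
  let ?\<rho> = "lt_partition A K h"
  have \<rho>: "?\<rho> \<in> Plt A"
    by (rule lt_partition_in_Plt[OF K h])
  have "(lt_target A ?\<rho> x, h x) \<in> K" if "x \<in> A" for x
  proof -
    have "(Und x, Pr (lt_target A ?\<rho> x)) \<in> anchor_equiv A K h"
      using lt_target(2)[OF \<rho> that] by (simp add: block_rel_lt_partition[OF K h])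
    then show ?thesis
      using equiv_sym[OF K] by (simp add: anchor_equiv_def)
  qed
  then show ?thesis
    using rrest_pair_eq_iff[OF K K lt_target_funcset[OF \<rho>] h]
    by (simp add: lt_to_rrest_def Rrel_lt_partition[OF K h])
qed

lemma lt_to_rrest_bij: "bij_betw lt_to_rrest (Plt A) (RRest_carrier (TX A) E)"
  unfolding bij_betw_def
proof (intro conjI inj_onI)
  fix \<rho> \<sigma> assume \<rho>: "\<rho> \<in> Plt A" and \<sigma>: "\<sigma> \<in> Plt A" and eq: "lt_to_rrest \<rho> = lt_to_rrest \<sigma>"
  then have "Rrel A \<rho> = Rrel A \<sigma> \<and> (\<forall>x\<in>A. (lt_target A \<rho> x, lt_target A \<sigma> x) \<in> Rrel A \<rho>)"
    unfolding lt_to_rrest_def rrest_pair_eq_iff[OF equiv_Rrel[OF \<rho>] equiv_Rrel[OF \<sigma>]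
        lt_target_funcset[OF \<rho>] lt_target_funcset[OF \<sigma>]] by blast
  then have RR: "Rrel A \<rho> = Rrel A \<sigma>"
    and rel: "\<forall>x\<in>A. (lt_target A \<rho> x, lt_target A \<sigma> x) \<in> Rrel A \<rho>"
    by blast+
  have "\<rho> = lt_partition A (Rrel A \<rho>) (lt_target A \<rho>)"
    by (rule Plt_eq_lt_partition[OF \<rho>])
  also have "\<dots> = lt_partition A (Rrel A \<rho>) (lt_target A \<sigma>)"
    using rel by (intro lt_partition_cong[OF equiv_Rrel[OF \<rho>]]) blast
  also have "\<dots> = \<sigma>"
    using Plt_eq_lt_partition[OF \<sigma>] RR by simp
  finally show "\<rho> = \<sigma>" .
next
  show "lt_to_rrest ` Plt A = RRest_carrier (TX A) E"
  proof (intro equalityI subsetI)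
    fix p assume "p \<in> lt_to_rrest ` Plt A"
    then show "p \<in> RRest_carrier (TX A) E"
      using rrest_pair_in_carrier[OF equiv_Rrel lt_target_funcset] by (auto simp: lt_to_rrest_def)
  next
    fix p assume "p \<in> RRest_carrier (TX A) E"
    then obtain s e where p: "p = (s, e)" and s: "s \<in> A \<rightarrow>\<^sub>E A" and e: "e \<in> E"
      and se: "compose A e s = s"
      by (auto simp: RRest_carrier_def TX_carrier TX_mult)
    have s': "s \<in> A \<rightarrow> A"
      using s by (simp add: PiE_iff)
    have "lt_to_rrest (lt_partition A (ker_on A e) s) = p"
      using lt_to_rrest_lt_partition[OF equiv_ker_on[of A e] s'] se p
      by (simp add: rrest_pair_def idem_of_ker[OF e])
    moreover have "lt_partition A (ker_on A e) s \<in> Plt A"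
      by (rule lt_partition_in_Plt[OF equiv_ker_on s'])
    ultimately show "p \<in> lt_to_rrest ` Plt A"
      by blast
  qed
qed

lemma lt_to_rrest_Rop:
  assumes \<rho>: "\<rho> \<in> Plt A"
  shows "lt_to_rrest (Rop A \<rho>) = RRest_R (lt_to_rrest \<rho>)"
proof -
  let ?e = "idem_of (Rrel A \<rho>)"
  have "?e \<in> A \<rightarrow>\<^sub>E A"
    using E_carrier idem_of(1)[OF equiv_Rrel[OF \<rho>]] by blast
  then have id: "compose A ?e (\<lambda>x. x) = ?e"
    by (intro extensionalityI[OF compose_extensional]) (auto simp: compose_eq PiE_iff)
  have "lt_to_rrest (Rop A \<rho>) = rrest_pair (Rrel A \<rho>) (\<lambda>x. x)"
    unfolding Rop_eq_lt_partition[OF \<rho>] by (rule lt_to_rrest_lt_partition[OF equiv_Rrel[OF \<rho>]]) simp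
  also have "\<dots> = RRest_R (lt_to_rrest \<rho>)"
    using id by (simp add: lt_to_rrest_def rrest_pair_def RRest_R_def)
  finally show ?thesis .
qed


lemma meet_dot_idem_of:
  assumes K1: "equiv A K1" and K2: "equiv A K2" and h1: "h1 \<in> A \<rightarrow> A" and h2: "h2 \<in> A \<rightarrow> A"
  defines "t \<equiv> compose A (idem_of K2) h2"
  shows "meet (TX A) E (dot (TX A) E (idem_of K1) t) (idem_of K2) = idem_of (lt_product_rel A K1 K2 h2)"
proof -
  interpret P: lt_product A K1 K2 h1 h2
    using K1 K2 h1 h2 by unfold_locales
  let ?e1 = "idem_of K1"
  let ?R = "{(t (?e1 x), t x) | x. x \<in> A}"
  have e1: "?e1 \<in> E" "x \<in> A \<Longrightarrow> ?e1 x \<in> A \<and> (?e1 x, x) \<in> K1" for x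
    using idem_of(1)[OF K1] idem_of_rel[OF K1, of x] equiv_memD[OF K1, of "?e1 x" x] by simp_all
  have t: "t \<in> A \<rightarrow>\<^sub>E A" "x \<in> A \<Longrightarrow> (t x, h2 x) \<in> K2" for x
  proof -
    show "t \<in> A \<rightarrow>\<^sub>E A"
      using E_carrier[OF idem_of(1)[OF K2]] h2 by (auto simp: t_def compose_def)
    show "x \<in> A \<Longrightarrow> (t x, h2 x) \<in> K2"
      using idem_of_rel[OF K2 funcset_mem[OF h2]] by (simp add: t_def compose_eq)
  qed
  have "?R \<subseteq> A \<times> A"
    using e1(2) t(1) by auto
  then have R: "equiv A (equiv_closure A ?R)"
    by (rule equiv_equiv_closure)
  have dot: "dot (TX A) E ?e1 t \<in> E" "ker_on A (dot (TX A) E ?e1 t) = equiv_closure A ?R"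
    using idem_of[OF R] by (simp_all add: dot_E[OF e1(1) t(1)])
  have "meet (TX A) E (dot (TX A) E ?e1 t) (idem_of K2)
      = idem_of (equiv_closure A (equiv_closure A ?R \<union> K2))"
    using meet_E[OF dot(1) idem_of(1)[OF K2]] dot(2) idem_of(2)[OF K2] by simp
  also have "equiv_closure A (equiv_closure A ?R \<union> K2) = equiv_closure A (?R \<union> K2)"
    using \<open>?R \<subseteq> A \<times> A\<close> equiv_type[OF K2] by (rule equiv_closure_Un_closure)
  also have "\<dots> = lt_product_rel A K1 K2 h2"
    using idem_of(2)[OF K1] e1(2) t by (intro P.dot_closure_eq_K3) (auto simp: PiE_iff)
  finally show ?thesis .
qed

lemma rrest_pair_mult_fst:
  assumes K1: "equiv A K1" and K2: "equiv A K2" and h1: "h1 \<in> A \<rightarrow> A" and h2: "h2 \<in> A \<rightarrow> A"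
  defines "K3 \<equiv> lt_product_rel A K1 K2 h2"
  shows "compose A (idem_of K1) h1 \<otimes>\<^bsub>TX A\<^esub> compose A (idem_of K2) h2 \<otimes>\<^bsub>TX A\<^esub> idem_of K3
    = compose A (idem_of K3) (\<lambda>x. h2 (h1 x))"
proof (intro extensionalityI[OF _ compose_extensional])
  interpret P: lt_product A K1 K2 h1 h2
    using K1 K2 h1 h2 by unfold_locales
  show "compose A (idem_of K1) h1 \<otimes>\<^bsub>TX A\<^esub> compose A (idem_of K2) h2 \<otimes>\<^bsub>TX A\<^esub> idem_of K3
      \<in> extensional A"
    by (simp add: TX_mult)
  fix x assume x: "x \<in> A"
  let ?y = "idem_of K1 (h1 x)"
  have y: "h1 x \<in> A" "?y \<in> A" "h2 ?y \<in> A"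
    using funcset_mem[OF h1 x] equiv_memD[OF K1 idem_of_rel[OF K1 funcset_mem[OF h1 x]]]
      funcset_mem[OF h2] by blast+
  have "(idem_of K2 (h2 ?y), h2 ?y) \<in> K3"
    using P.K2_K3 idem_of_rel[OF K2 y(3)] by (simp add: K3_def)
  moreover have "(h2 ?y, h2 (h1 x)) \<in> K3"
    using P.K1_K3[OF idem_of_rel[OF K1 y(1)]] by (simp add: K3_def)
  ultimately have "(idem_of K2 (h2 ?y), h2 (h1 x)) \<in> K3"
    using equiv_trans[OF P.equiv_K3] by (simp add: K3_def)
  then have "idem_of K3 (idem_of K2 (h2 ?y)) = idem_of K3 (h2 (h1 x))"
    using idem_of_eq_iff[OF P.equiv_K3] equiv_memD[OF P.equiv_K3] by (simp add: K3_def)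
  then show "(compose A (idem_of K1) h1 \<otimes>\<^bsub>TX A\<^esub> compose A (idem_of K2) h2 \<otimes>\<^bsub>TX A\<^esub> idem_of K3) x
      = compose A (idem_of K3) (\<lambda>x. h2 (h1 x)) x"
    using x y by (simp add: TX_mult compose_eq)
qed

lemma rrest_pair_mult:
  assumes "equiv A K1" "equiv A K2" "h1 \<in> A \<rightarrow> A" "h2 \<in> A \<rightarrow> A"
  shows "RRest_mult (TX A) E (rrest_pair K1 h1) (rrest_pair K2 h2)
    = rrest_pair (lt_product_rel A K1 K2 h2) (\<lambda>x. h2 (h1 x))"
  using meet_dot_idem_of[OF assms] rrest_pair_mult_fst[OF assms]
  by (simp add: RRest_mult_def rrest_pair_def Let_def)

lemma lt_to_rrest_mult:
  assumes \<rho>: "\<rho> \<in> Plt A" and \<sigma>: "\<sigma> \<in> Plt A"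
  shows "lt_to_rrest (pmult A \<rho> \<sigma>) = RRest_mult (TX A) E (lt_to_rrest \<rho>) (lt_to_rrest \<sigma>)"
proof -
  interpret P: lt_product A "Rrel A \<rho>" "Rrel A \<sigma>" "lt_target A \<rho>" "lt_target A \<sigma>"
    using equiv_Rrel[OF \<rho>] equiv_Rrel[OF \<sigma>] lt_target_funcset[OF \<rho>] lt_target_funcset[OF \<sigma>]
    by unfold_locales
  have "pmult A \<rho> \<sigma> = lt_partition A (lt_product_rel A (Rrel A \<rho>) (Rrel A \<sigma>) (lt_target A \<sigma>))
      (\<lambda>x. lt_target A \<sigma> (lt_target A \<rho> x))"
    using P.pmult_lt_partition Plt_eq_lt_partition[OF \<rho>] Plt_eq_lt_partition[OF \<sigma>] by simp
  then show ?thesis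
    using lt_to_rrest_lt_partition[OF P.equiv_K3 P.comp_funcset]
      rrest_pair_mult[OF P.K1 P.K2 P.h1 P.h2]
    by (simp add: lt_to_rrest_def)
qed

end

theorem theorem7p10:
  fixes A :: "'a set"
  assumes "A \<noteq> {}"
  shows "right_protomodal (TX A) \<and>
    (\<forall>E. max_left_pre_reduced (TX A) E \<longrightarrow>
       inductive_right_E_monoid (TX A) E \<and>
       (\<exists>\<phi>. bij_betw \<phi> (Plt A) (RRest_carrier (TX A) E) \<and>
            (\<forall>x\<in>Plt A. \<forall>y\<in>Plt A.
               \<phi> (pmult A x y) = RRest_mult (TX A) E (\<phi> x) (\<phi> y)) \<and>
            (\<forall>x\<in>Plt A. \<phi> (Rop A x) = RRest_R (\<phi> x))))"
proof (intro conjI allI impI)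
  show "right_protomodal (TX A)"
    by (rule right_protomodal_TX)
  fix E assume "max_left_pre_reduced (TX A) E"
  then interpret TX_transversal A E
    by unfold_locales
  show "inductive_right_E_monoid (TX A) E"
    by (rule inductive_right_E_monoid_TX)
  show "\<exists>\<phi>. bij_betw \<phi> (Plt A) (RRest_carrier (TX A) E) \<and>
      (\<forall>x\<in>Plt A. \<forall>y\<in>Plt A. \<phi> (pmult A x y) = RRest_mult (TX A) E (\<phi> x) (\<phi> y)) \<and>
      (\<forall>x\<in>Plt A. \<phi> (Rop A x) = RRest_R (\<phi> x))"
    using lt_to_rrest_bij lt_to_rrest_mult lt_to_rrest_Rop by blast
qed

end
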